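(* Let $X$ be a Tychonoff space and let $\upsilon$ be a finite-component cover of $X$. Then the family $$\exp_\beta\upsilon=\{O\langle U_1,\dots,U_n\rangle\cap\exp_\beta X:\ U_i\in\upsilon,\ i=1,\dots,n;\ n\in\mathbb N\}$$ is a finite-component cover of the space $\exp_\beta X$.
   Context: All spaces are $T_1$. A collection $\omega$ of subsets of a set is star-finite if each element of $\omega$ meets only finitely many elements of $\omega$. A finite sequence $M_0,\dots,M_s$ of sets is a chain connecting $M_0$ and $M_s$ if $M_{i-1}\cap M_i\neq\varnothing$ for $i=1,\dots,s$; a collection is connected if any two of its members are connected by a chain in it; the maximal connected subcollections of $\omega$ are the components of $\omega$. A finite-component cover of a space is a star-finite open cover each of whose components has finitely many elements. For a space $Z$, $\exp Z$ is the set of nonempty closed subsets of $Z$ with the Vietoris topology, whose base consists of the sets $O\langle U_1,\dots,U_n\rangle=\{F\in\exp Z: F\subset\bigcup_{i=1}^n U_i,\ F\cap U_i\neq\varnothing\ (i=1,\dots,n)\}$, $U_i$ nonempty open in $Z$. For a Tychonoff space $X$, $\exp_\beta X=\{F\in\exp\beta X: F\subset X\}$ (the nonempty compact subsets of $X$) with the subspace topology from $\exp\beta X$, where $\beta X$ is the Stone–Čech compactification. *)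

theory Defs
  imports "HOL-Analysis.Analysis"
begin

definition tychonoff_space :: "'a topology \<Rightarrow> bool" where
  "tychonoff_space X \<longleftrightarrow> t1_space X \<and> completely_regular_space X"

definition stone_cech :: "'a topology \<Rightarrow> 'b topology \<Rightarrow> ('a \<Rightarrow> 'b) \<Rightarrow> bool" where
  "stone_cech X K e \<longleftrightarrow>
     compact_space K \<and> Hausdorff_space K \<and> embedding_map X K e \<and>
     K closure_of (e ` topspace X) = topspace K \<and>
     (\<forall>f. continuous_map X euclideanreal f \<and> bounded (f ` topspace X) \<longrightarrow>
        (\<exists>g. continuous_map K euclideanreal g \<and> (\<forall>x\<in>topspace X. g (e x) = f x)))"

definition vietoris_basic :: "'a topology \<Rightarrow> 'a set set \<Rightarrow> 'a set set" where
  "vietoris_basic Z Us = {F. closedin Z F \<and> F \<noteq> {} \<and> F \<subseteq> \<Union>Us \<and> (\<forall>U\<in>Us. F \<inter> U \<noteq> {})}"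

definition vietoris :: "'a topology \<Rightarrow> 'a set topology" where
  "vietoris Z = topology_generated_by
     {vietoris_basic Z Us | Us. finite Us \<and> Us \<noteq> {} \<and>
        (\<forall>U\<in>Us. openin Z U \<and> U \<noteq> {})}"

definition exp_beta :: "'a topology \<Rightarrow> 'b topology \<Rightarrow> ('a \<Rightarrow> 'b) \<Rightarrow> 'b set topology" where
  "exp_beta X K e = subtopology (vietoris K)
     {F \<in> topspace (vietoris K). F \<subseteq> e ` topspace X}"

definition exp_beta_family ::
  "'a topology \<Rightarrow> 'b topology \<Rightarrow> ('a \<Rightarrow> 'b) \<Rightarrow> 'a set set \<Rightarrow> 'b set set set" where
  "exp_beta_family X K e \<upsilon> =
     {{F \<in> topspace (exp_beta X K e). F \<subseteq> e ` \<Union>Us \<and> (\<forall>U\<in>Us. F \<inter> e ` U \<noteq> {})}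
      | Us. finite Us \<and> Us \<noteq> {} \<and> Us \<subseteq> \<upsilon>}"

definition star_finite :: "'a set set \<Rightarrow> bool" where
  "star_finite \<omega> \<longleftrightarrow> (\<forall>W\<in>\<omega>. finite {V \<in> \<omega>. V \<inter> W \<noteq> {}})"

text \<open>Two members are linked by a chain iff they are related by the reflexive-transitive
  closure of the "meets" relation on the collection.\<close>
definition meets_rel :: "'a set set \<Rightarrow> ('a set \<times> 'a set) set" where
  "meets_rel \<omega> = {(V, W). V \<in> \<omega> \<and> W \<in> \<omega> \<and> V \<inter> W \<noteq> {}}"

definition component_of_family :: "'a set set \<Rightarrow> 'a set \<Rightarrow> 'a set set" where
  "component_of_family \<omega> W = {V \<in> \<omega>. (W, V) \<in> (meets_rel \<omega>)\<^sup>*}"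

definition open_cover :: "'a topology \<Rightarrow> 'a set set \<Rightarrow> bool" where
  "open_cover Y \<omega> \<longleftrightarrow> (\<forall>W\<in>\<omega>. openin Y W) \<and> \<Union>\<omega> = topspace Y"

definition finite_component_cover :: "'a topology \<Rightarrow> 'a set set \<Rightarrow> bool" where
  "finite_component_cover Y \<omega> \<longleftrightarrow>
     open_cover Y \<omega> \<and> star_finite \<omega> \<and> (\<forall>W\<in>\<omega>. finite (component_of_family \<omega> W))"

end

theory Submission
  imports Defs
begin

text \<open>A nonempty compact \<open>F \<subseteq> X\<close> meets only finitely many members of the star-finite
  cover \<open>\<upsilon>\<close>, so \<open>F \<in> O\<langle>U\<^sub>1,\<dots>,U\<^sub>n\<rangle>\<close> for the finitely many \<open>U\<^sub>i \<in> \<upsilon>\<close> meeting \<open>F\<close>; and these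
  sets are open because \<open>X\<close> is a subspace of \<open>\<beta>X\<close>. If \<open>O\<langle>U\<^sub>1,\<dots>,U\<^sub>n\<rangle>\<close> meets \<open>O\<langle>V\<^sub>1,\<dots>,V\<^sub>m\<rangle>\<close>,
  then every \<open>V\<^sub>j\<close> meets some \<open>U\<^sub>i\<close>. Hence the members of \<open>exp\<^sub>\<beta>\<upsilon>\<close> meeting a given one, and
  those in its component, are indexed by subsets of a finite subfamily of \<open>\<upsilon>\<close>: the star of
  \<open>{U\<^sub>1,\<dots>,U\<^sub>n}\<close>, respectively the union of the components of the \<open>U\<^sub>i\<close>.\<close>

definition star_of :: "'a set set \<Rightarrow> 'a set set \<Rightarrow> 'a set set" where
  "star_of \<omega> A = {V \<in> \<omega>. \<exists>U\<in>A. U \<inter> V \<noteq> {}}"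

lemma star_of_mono: "A \<subseteq> B \<Longrightarrow> star_of \<omega> A \<subseteq> star_of \<omega> B"
  unfolding star_of_def by blast

lemma finite_star_of:
  assumes "star_finite \<omega>" and "finite A" and "A \<subseteq> \<omega>"
  shows "finite (star_of \<omega> A)"
proof (rule finite_subset)
  show "star_of \<omega> A \<subseteq> (\<Union>U\<in>A. {V \<in> \<omega>. V \<inter> U \<noteq> {}})"
    unfolding star_of_def by blast
  show "finite (\<Union>U\<in>A. {V \<in> \<omega>. V \<inter> U \<noteq> {}})"
    using assms unfolding star_finite_def by blast
qed

lemma star_of_components_subset:
  "star_of \<omega> (\<Union>U\<in>A. component_of_family \<omega> U) \<subseteq> (\<Union>U\<in>A. component_of_family \<omega> U)"
proof
  fix V' assume "V' \<in> star_of \<omega> (\<Union>U\<in>A. component_of_family \<omega> U)"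
  then obtain U V where "U \<in> A" "V' \<in> \<omega>" "V \<in> \<omega>" "V \<inter> V' \<noteq> {}"
    and "(U, V) \<in> (meets_rel \<omega>)\<^sup>*"
    unfolding star_of_def component_of_family_def by blast
  then have "(U, V') \<in> (meets_rel \<omega>)\<^sup>*"
    by (auto simp: meets_rel_def intro: rtrancl_into_rtrancl)
  with \<open>U \<in> A\<close> \<open>V' \<in> \<omega>\<close> show "V' \<in> (\<Union>U\<in>A. component_of_family \<omega> U)"
    unfolding component_of_family_def by blast
qed

lemma star_finite_image_family:
  assumes "star_finite \<omega>" and Idx: "Idx \<subseteq> {Us. finite Us \<and> Us \<subseteq> \<omega>}"
    and meets: "\<And>Us Vs. Us \<in> Idx \<Longrightarrow> Vs \<in> Idx \<Longrightarrow> f Us \<inter> f Vs \<noteq> {} \<Longrightarrow> Vs \<subseteq> star_of \<omega> Us"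
  shows "star_finite (f ` Idx)"
  unfolding star_finite_def
proof
  fix W assume "W \<in> f ` Idx"
  then obtain Us where Us: "Us \<in> Idx" "W = f Us" by blast
  have "{V \<in> f ` Idx. V \<inter> W \<noteq> {}} \<subseteq> f ` Pow (star_of \<omega> Us)"
  proof
    fix V assume "V \<in> {V \<in> f ` Idx. V \<inter> W \<noteq> {}}"
    then obtain Vs where "Vs \<in> Idx" "V = f Vs" "f Us \<inter> f Vs \<noteq> {}"
      using Us by (auto simp: Int_commute)
    then show "V \<in> f ` Pow (star_of \<omega> Us)"
      using meets[OF Us(1)] by blast
  qed
  moreover have "finite (star_of \<omega> Us)"
    using finite_star_of assms(1) Us Idx by blast
  ultimately show "finite {V \<in> f ` Idx. V \<inter> W \<noteq> {}}"
    by (simp add: finite_subset)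
qed

lemma finite_component_image_family:
  assumes fc: "\<forall>W\<in>\<omega>. finite (component_of_family \<omega> W)"
    and Idx: "Idx \<subseteq> {Us. finite Us \<and> Us \<subseteq> \<omega>}"
    and meets: "\<And>Us Vs. Us \<in> Idx \<Longrightarrow> Vs \<in> Idx \<Longrightarrow> f Us \<inter> f Vs \<noteq> {} \<Longrightarrow> Vs \<subseteq> star_of \<omega> Us"
    and Us: "Us \<in> Idx"
  shows "finite (component_of_family (f ` Idx) (f Us))"
proof -
  define S where "S = (\<Union>U\<in>Us. component_of_family \<omega> U)"
  have "Us \<subseteq> S"
    using Us Idx unfolding S_def component_of_family_def by auto
  have reach: "\<exists>Vs\<in>Idx. Vs \<subseteq> S \<and> V = f Vs"
    if "(f Us, V) \<in> (meets_rel (f ` Idx))\<^sup>*" for V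
    using that
  proof (induction rule: rtrancl_induct)
    case base
    show ?case using Us \<open>Us \<subseteq> S\<close> by blast
  next
    case (step V1 V2)
    then obtain Vs where Vs: "Vs \<in> Idx" "Vs \<subseteq> S" "V1 = f Vs" by blast
    from step.hyps(2) obtain Vs' where Vs': "Vs' \<in> Idx" "V2 = f Vs'" "V1 \<inter> V2 \<noteq> {}"
      unfolding meets_rel_def by blast
    have "Vs' \<subseteq> star_of \<omega> S"
      using meets[OF Vs(1) Vs'(1)] Vs Vs' star_of_mono[OF Vs(2)] by blast
    also have "\<dots> \<subseteq> S"
      unfolding S_def by (rule star_of_components_subset)
    finally show ?case using Vs' by blast
  qed
  have "component_of_family (f ` Idx) (f Us) \<subseteq> f ` Pow S"
    unfolding component_of_family_def using reach by blast
  moreover have "finite S"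
    unfolding S_def using fc Us Idx by auto
  ultimately show ?thesis
    by (simp add: finite_subset)
qed

definition exp_beta_basic :: "'a topology \<Rightarrow> 'b topology \<Rightarrow> ('a \<Rightarrow> 'b) \<Rightarrow> 'a set set \<Rightarrow> 'b set set"
  where "exp_beta_basic X K e Us =
    {F \<in> topspace (exp_beta X K e). F \<subseteq> e ` \<Union>Us \<and> (\<forall>U\<in>Us. F \<inter> e ` U \<noteq> {})}"

lemma exp_beta_family_eq_image:
  "exp_beta_family X K e \<upsilon> = exp_beta_basic X K e ` {Us. finite Us \<and> Us \<noteq> {} \<and> Us \<subseteq> \<upsilon>}"
  unfolding exp_beta_family_def exp_beta_basic_def by blast

lemma topspace_exp_beta:
  "topspace (exp_beta X K e) = {F \<in> topspace (vietoris K). F \<subseteq> e ` topspace X}"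
  unfolding exp_beta_def by auto

lemma closedin_nonempty_if_in_topspace_vietoris:
  assumes "F \<in> topspace (vietoris K)"
  shows "closedin K F" and "F \<noteq> {}"
  using assms unfolding vietoris_def vietoris_basic_def by auto

lemma openin_vietoris_basic:
  assumes "finite Us" and "Us \<noteq> {}" and "\<And>U. U \<in> Us \<Longrightarrow> openin K U \<and> U \<noteq> {}"
  shows "openin (vietoris K) (vietoris_basic K Us)"
  unfolding vietoris_def
  by (rule topology_generated_by_Basis) (use assms in blast)

lemma trace_vietoris_conditions:
  assumes "F \<subseteq> T" and "\<And>U. U \<in> Us \<Longrightarrow> A U = G U \<inter> T"
  shows "(F \<subseteq> \<Union>(A ` Us) \<and> (\<forall>U\<in>Us. F \<inter> A U \<noteq> {})) \<longleftrightarrow>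
         (F \<subseteq> \<Union>(G ` Us) \<and> (\<forall>U\<in>Us. F \<inter> G U \<noteq> {}))"
  using assms by blast

lemma exp_beta_basic_meets_imp_subset_star:
  assumes "inj_on e (topspace X)" and "\<And>U. U \<in> \<upsilon> \<Longrightarrow> U \<subseteq> topspace X"
    and "Us \<subseteq> \<upsilon>" and "Vs \<subseteq> \<upsilon>"
    and "exp_beta_basic X K e Us \<inter> exp_beta_basic X K e Vs \<noteq> {}"
  shows "Vs \<subseteq> star_of \<upsilon> Us"
proof
  fix V assume "V \<in> Vs"
  obtain F where "F \<subseteq> e ` \<Union>Us" "F \<inter> e ` V \<noteq> {}"
    using assms(5) \<open>V \<in> Vs\<close> unfolding exp_beta_basic_def by blast
  then obtain U x x' where "U \<in> Us" "x' \<in> U" "x \<in> V" "e x = e x'"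
    by blast
  moreover have "x = x'"
    using calculation assms(1-4) \<open>V \<in> Vs\<close> by (meson inj_onD subsetD)
  ultimately show "V \<in> star_of \<upsilon> Us"
    using assms(4) \<open>V \<in> Vs\<close> unfolding star_of_def by blast
qed

lemma openin_exp_beta_basic:
  assumes emb: "embedding_map X K e"
    and Us: "finite Us" "Us \<noteq> {}" "\<And>U. U \<in> Us \<Longrightarrow> openin X U"
  shows "openin (exp_beta X K e) (exp_beta_basic X K e Us)"
proof (cases "{} \<in> Us")
  case True
  then have "exp_beta_basic X K e Us = {}"
    unfolding exp_beta_basic_def by auto
  then show ?thesis by simp
next
  case False
  let ?T = "e ` topspace X"
  have "\<exists>G. openin K G \<and> e ` U = G \<inter> ?T" if "U \<in> Us" for U
  proof -
    have "openin (subtopology K ?T) (e ` U)"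
      using emb Us(3)[OF that] homeomorphic_map_openness_eq
      unfolding embedding_map_def by blast
    then show ?thesis by (auto simp: openin_subtopology)
  qed
  then obtain G where G: "\<And>U. U \<in> Us \<Longrightarrow> openin K (G U) \<and> e ` U = G U \<inter> ?T"
    by metis
  have "G U \<noteq> {}" if "U \<in> Us" for U
    using G[OF that] False that by auto
  then have "openin (vietoris K) (vietoris_basic K (G ` Us))"
    using G Us by (intro openin_vietoris_basic) auto
  moreover have "exp_beta_basic X K e Us = vietoris_basic K (G ` Us) \<inter> topspace (exp_beta X K e)"
  proof (rule set_eqI)
    fix F
    show "F \<in> exp_beta_basic X K e Us \<longleftrightarrow> F \<in> vietoris_basic K (G ` Us) \<inter> topspace (exp_beta X K e)"
    proof (cases "F \<in> topspace (exp_beta X K e)")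
      case True
      then have "F \<subseteq> ?T" and "closedin K F" and "F \<noteq> {}"
        using closedin_nonempty_if_in_topspace_vietoris by (auto simp: topspace_exp_beta)
      with True show ?thesis
        using trace_vietoris_conditions[of F ?T Us "image e" G] G
        by (simp add: exp_beta_basic_def vietoris_basic_def image_Union)
    qed (simp add: exp_beta_basic_def)
  qed
  ultimately show ?thesis
    unfolding exp_beta_def openin_subtopology topspace_exp_beta[unfolded exp_beta_def] by blast
qed

lemma finite_members_meeting_compactin:
  assumes cover: "open_cover X \<omega>" and "star_finite \<omega>" and "compactin X C"
  shows "finite {U \<in> \<omega>. U \<inter> C \<noteq> {}}"
proof -
  have "C \<subseteq> \<Union>\<omega>"
    using cover \<open>compactin X C\<close> compactin_subset_topspace unfolding open_cover_def by blast
  then obtain Fin where Fin: "finite Fin" "Fin \<subseteq> \<omega>" "C \<subseteq> \<Union>Fin"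
    using cover \<open>compactin X C\<close> unfolding open_cover_def compactin_def by meson
  then have "{U \<in> \<omega>. U \<inter> C \<noteq> {}} \<subseteq> star_of \<omega> Fin"
    unfolding star_of_def by blast
  with Fin finite_star_of \<open>star_finite \<omega>\<close> show ?thesis
    by (meson finite_subset)
qed

lemma compactin_preimage_exp_beta:
  assumes emb: "embedding_map X K e" and "compact_space K"
    and F: "F \<in> topspace (exp_beta X K e)"
  shows "compactin X {x \<in> topspace X. e x \<in> F}" and "e ` {x \<in> topspace X. e x \<in> F} = F"
proof -
  have FX: "F \<subseteq> e ` topspace X" and "closedin K F"
    using F closedin_nonempty_if_in_topspace_vietoris by (auto simp: topspace_exp_beta)
  then show image: "e ` {x \<in> topspace X. e x \<in> F} = F"
    by auto
  have "compactin (subtopology K (e ` topspace X)) F"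
    using closedin_compact_space[OF \<open>compact_space K\<close> \<open>closedin K F\<close>] FX
    by (simp add: compactin_subtopology)
  then show "compactin X {x \<in> topspace X. e x \<in> F}"
    using homeomorphic_map_compactness_eq emb image unfolding embedding_map_def
    by (metis (no_types, lifting) mem_Collect_eq subsetI)
qed

lemma exp_beta_basic_cover:
  assumes emb: "embedding_map X K e" and "compact_space K"
    and cover: "open_cover X \<upsilon>" and "star_finite \<upsilon>"
    and F: "F \<in> topspace (exp_beta X K e)"
  obtains Us where "finite Us" "Us \<noteq> {}" "Us \<subseteq> \<upsilon>" "F \<in> exp_beta_basic X K e Us"
proof
  define C where "C = {x \<in> topspace X. e x \<in> F}"
  define Us where "Us = {U \<in> \<upsilon>. U \<inter> C \<noteq> {}}"
  have "compactin X C" and image: "e ` C = F"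
    using compactin_preimage_exp_beta[OF emb \<open>compact_space K\<close> F] unfolding C_def by auto
  show "finite Us"
    unfolding Us_def
    using finite_members_meeting_compactin[OF cover \<open>star_finite \<upsilon>\<close> \<open>compactin X C\<close>] .
  show "Us \<subseteq> \<upsilon>"
    unfolding Us_def by blast
  have "C \<subseteq> \<Union>Us"
    using cover unfolding Us_def C_def open_cover_def by blast
  moreover have "C \<noteq> {}"
    using image F closedin_nonempty_if_in_topspace_vietoris by (auto simp: topspace_exp_beta)
  ultimately show "Us \<noteq> {}"
    by blast
  show "F \<in> exp_beta_basic X K e Us"
    using F image \<open>C \<subseteq> \<Union>Us\<close> unfolding exp_beta_basic_def Us_def by blast
qed

lemma open_cover_exp_beta_basic:
  assumes emb: "embedding_map X K e" and "compact_space K"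
    and cover: "open_cover X \<upsilon>" and "star_finite \<upsilon>"
  shows "open_cover (exp_beta X K e) (exp_beta_basic X K e ` {Us. finite Us \<and> Us \<noteq> {} \<and> Us \<subseteq> \<upsilon>})"
    (is "open_cover _ (_ ` ?Idx)")
  unfolding open_cover_def
proof (intro conjI ballI)
  fix W assume "W \<in> exp_beta_basic X K e ` ?Idx"
  then obtain Us where "finite Us" "Us \<noteq> {}" "Us \<subseteq> \<upsilon>" "W = exp_beta_basic X K e Us"
    by blast
  moreover have "\<And>U. U \<in> \<upsilon> \<Longrightarrow> openin X U"
    using cover unfolding open_cover_def by blast
  ultimately show "openin (exp_beta X K e) W"
    by (auto intro!: openin_exp_beta_basic[OF emb])
next
  have "F \<in> \<Union>(exp_beta_basic X K e ` ?Idx)" if F: "F \<in> topspace (exp_beta X K e)" for F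
  proof -
    obtain Us where "finite Us" "Us \<noteq> {}" "Us \<subseteq> \<upsilon>" "F \<in> exp_beta_basic X K e Us"
      by (rule exp_beta_basic_cover[OF assms F])
    then show ?thesis by blast
  qed
  moreover have "exp_beta_basic X K e Us \<subseteq> topspace (exp_beta X K e)" for Us
    unfolding exp_beta_basic_def by blast
  ultimately show "\<Union>(exp_beta_basic X K e ` ?Idx) = topspace (exp_beta X K e)"
    by blast
qed

theorem lemma3:
  fixes X :: "'a topology" and K :: "'b topology" and e :: "'a \<Rightarrow> 'b"
    and \<upsilon> :: "'a set set"
  assumes "tychonoff_space X"
    and "stone_cech X K e"
    and "finite_component_cover X \<upsilon>"
  shows "finite_component_cover (exp_beta X K e) (exp_beta_family X K e \<upsilon>)"
proof -
  have emb: "embedding_map X K e" and "compact_space K"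
    using assms(2) unfolding stone_cech_def by auto
  then have inj: "inj_on e (topspace X)"
    unfolding embedding_map_def using homeomorphic_imp_injective_map by blast
  have cover: "open_cover X \<upsilon>" and sf: "star_finite \<upsilon>"
    and fc: "\<forall>W\<in>\<upsilon>. finite (component_of_family \<upsilon> W)"
    using assms(3) unfolding finite_component_cover_def by auto
  then have sub: "\<And>U. U \<in> \<upsilon> \<Longrightarrow> U \<subseteq> topspace X"
    unfolding open_cover_def using openin_subset by blast
  define Idx where "Idx = {Us. finite Us \<and> Us \<noteq> {} \<and> Us \<subseteq> \<upsilon>}"
  have Idx: "Idx \<subseteq> {Us. finite Us \<and> Us \<subseteq> \<upsilon>}"
    unfolding Idx_def by blast
  have meets: "Vs \<subseteq> star_of \<upsilon> Us"
    if "Us \<in> Idx" "Vs \<in> Idx" "exp_beta_basic X K e Us \<inter> exp_beta_basic X K e Vs \<noteq> {}" for Us Vs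
    using exp_beta_basic_meets_imp_subset_star[OF inj sub] that unfolding Idx_def by blast
  show ?thesis
    unfolding finite_component_cover_def exp_beta_family_eq_image Idx_def[symmetric]
    using open_cover_exp_beta_basic[OF emb \<open>compact_space K\<close> cover sf, folded Idx_def]
      star_finite_image_family[OF sf Idx meets] finite_component_image_family[OF fc Idx meets]
    by blast
qed

end
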